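(* Let $U^{(r)}$ be uniformly distributed on the Stiefel manifold $V_r(\mathbb{R}^d)=\{U\in\mathbb{R}^{d\times r}:U^\top U=I_r\}$ and let $U\in V_r(\mathbb{R}^d)$ be deterministic. Then for any $\epsilon>0$, there exists $c>0$, depending only on $d$ and $r$, such that $$\mathbb{P}(\|U^{(r)}-U\|_{\mathrm{op}}\le\epsilon)\ge c\,(\epsilon\wedge\tfrac12)^{dr}.$$
   Context: $\|A\|_{\mathrm{op}}=\sup_{\|x\|_2=1}\|Ax\|_2$ is the operator norm. The uniform distribution on $V_r(\mathbb{R}^d)$ is the law of $Z(Z^\top Z)^{-1/2}$ for a $d\times r$ matrix $Z$ with independent $N(0,1)$ entries. *)

theory Defs
  imports "HOL-Analysis.Analysis" "HOL-Probability.Probability"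
begin

definition psd_sqrt :: "real^'n^'n \<Rightarrow> real^'n^'n" where
  "psd_sqrt A = (THE S. transpose S = S \<and> (\<forall>x. 0 \<le> x \<bullet> (S *v x)) \<and> S ** S = A)"

definition stiefel_map :: "real^'r^'d \<Rightarrow> real^'r^'d" where
  "stiefel_map Z = Z ** matrix_inv (psd_sqrt (transpose Z ** Z))"

definition gauss_mat :: "(real^'r^'d) measure" where
  "gauss_mat = density lborel
     (\<lambda>Z. ennreal (\<Prod>i\<in>UNIV. \<Prod>j\<in>UNIV. std_normal_density (Z $ i $ j)))"

definition stiefel :: "(real^'r^'d) set" where
  "stiefel = {U. transpose U ** U = mat 1}"

end

(*
  A Gaussian matrix lies in a fixed cube of side 2 eta inside [-2, 2]^(d r) with probability at
  least (2 eta phi(2))^(d r), so it suffices to find a cube around U, of side proportional to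
  min eps (1/2), that Z |-> Z (Z^T Z)^(-1/2) maps into the eps-ball around U.  If Z = U + E with
  ||E|| <= delta <= 1/16, then ||Z^T Z - I|| <= 3 delta; the square root P of Z^T Z satisfies
  ||P - I|| <= 3 delta because (P + I) (P - I) = Z^T Z - I and P + I >= I; hence P is invertible
  with ||P^(-1)|| <= 2, and Z P^(-1) - U = E P^(-1) - U (P - I) P^(-1) has norm at most 8 delta.

  For this, psd_sqrt must be meaningful on all Gram matrices: the square root exists (a
  contraction argument near the identity, rescaling, and a compactness limit) and is unique
  (a trace argument).  The event is measurable because psd_sqrt and matrix_inv are continuous,
  both by closed-graph arguments.
*)
theory Submission
  imports Defs
begin

section \<open>Symmetric and positive semidefinite matrices\<close>

definition symmetric_matrix :: "real^'n^'n \<Rightarrow> bool" where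
  "symmetric_matrix M \<longleftrightarrow> transpose M = M"

definition psd_matrix :: "real^'n^'n \<Rightarrow> bool" where
  "psd_matrix M \<longleftrightarrow> (\<forall>x. 0 \<le> x \<bullet> (M *v x))"

lemma matrix_add_rdistrib: "((A::'a::semiring_1^'n^'m) + B) ** C = A ** C + B ** C"
  by (vector matrix_matrix_mult_def sum.distrib[symmetric] field_simps)

lemma matrix_diff_ldistrib: "(A::'a::ring_1^'n^'m) ** (B - C) = A ** B - A ** C"
  by (vector matrix_matrix_mult_def sum_subtractf[symmetric] field_simps)

lemma matrix_diff_rdistrib: "((A::'a::ring_1^'n^'m) - B) ** C = A ** C - B ** C"
  by (vector matrix_matrix_mult_def sum_subtractf[symmetric] field_simps)

lemma transpose_add: "transpose ((A::'a::semiring_1^'n^'m) + B) = transpose A + transpose B"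
  by (simp add: transpose_def vec_eq_iff)

lemma transpose_diff: "transpose ((A::'a::ring_1^'n^'m) - B) = transpose A - transpose B"
  by (simp add: transpose_def vec_eq_iff)

lemma inner_matrix_vector_mult_transpose:
  fixes A :: "real^'n^'m"
  shows "x \<bullet> (A *v y) = (transpose A *v x) \<bullet> y"
  by (simp add: dot_lmul_matrix)

lemma matrix_eq_0_if_columns_0:
  fixes M :: "real^'n^'m"
  assumes "\<And>i. M *v axis i 1 = 0"
  shows "M = 0"
  using assms by (simp add: matrix_vector_mult_basis column_def vec_eq_iff)

lemma trace_eq_sum_inner_axis: "trace (M::real^'n^'n) = (\<Sum>i\<in>UNIV. axis i 1 \<bullet> (M *v axis i 1))"
  by (simp add: trace_def matrix_vector_mult_basis column_def inner_axis')

lemma symmetric_matrix_inner: "symmetric_matrix A \<Longrightarrow> x \<bullet> (A *v y) = (A *v x) \<bullet> y"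
  by (metis inner_matrix_vector_mult_transpose symmetric_matrix_def)

lemma symmetric_matrix_add: "symmetric_matrix A \<Longrightarrow> symmetric_matrix B \<Longrightarrow> symmetric_matrix (A + B)"
  by (simp add: symmetric_matrix_def transpose_add)

lemma symmetric_matrix_diff: "symmetric_matrix A \<Longrightarrow> symmetric_matrix B \<Longrightarrow> symmetric_matrix (A - B)"
  by (simp add: symmetric_matrix_def transpose_diff)

lemma symmetric_matrix_scaleR: "symmetric_matrix A \<Longrightarrow> symmetric_matrix (c *\<^sub>R A)"
  by (simp add: symmetric_matrix_def transpose_scalar)

lemma symmetric_matrix_mat: "symmetric_matrix (mat c)"
  by (simp add: symmetric_matrix_def)

lemma symmetric_matrix_square: "symmetric_matrix A \<Longrightarrow> symmetric_matrix (A ** A)"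
  by (simp add: symmetric_matrix_def matrix_transpose_mul)

lemma symmetric_matrix_gram: "symmetric_matrix (transpose Z ** (Z::real^'r^'d))"
  by (simp add: symmetric_matrix_def matrix_transpose_mul)

lemma psd_matrix_scaleR: "psd_matrix A \<Longrightarrow> 0 \<le> c \<Longrightarrow> psd_matrix (c *\<^sub>R A)"
  by (simp add: psd_matrix_def scaleR_matrix_vector_assoc[symmetric])

lemma psd_matrix_gram: "psd_matrix (transpose Z ** (Z::real^'r^'d))"
  unfolding psd_matrix_def
  by (metis inner_matrix_vector_mult_transpose inner_ge_zero matrix_vector_mul_assoc transpose_transpose)

lemma nonneg_quadratic_imp_linear_coeff_0:
  fixes a b :: real
  assumes "\<And>t. 0 \<le> 2*t*a + t^2*b"
  shows "a = 0"
proof (rule ccontr)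
  assume "a \<noteq> 0"
  have b: "0 \<le> b" using assms[of 1] assms[of "-1"] by simp
  define t where "t = - a / (b+1)"
  have "0 \<le> 2*t*a + t^2*b" by (rule assms)
  also have "2*t*a + t^2*b = a^2 * (-b-2) / (b+1)^2"
    using b unfolding t_def by (simp add: power2_eq_square divide_simps) (simp add: algebra_simps)
  also have "\<dots> < 0" using b \<open>a \<noteq> 0\<close>
    by (intro divide_neg_pos mult_pos_neg) auto
  finally show False by simp
qed

lemma psd_matrix_quadratic_form_eq_0D:
  assumes "symmetric_matrix P" "psd_matrix P" "y \<bullet> (P *v y) = 0"
  shows "P *v y = 0"
proof -
  let ?z = "P *v y"
  have "0 \<le> 2*t*(?z \<bullet> ?z) + t^2*(?z \<bullet> (P *v ?z))" for t
  proof -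
    have "0 \<le> (y + t *\<^sub>R ?z) \<bullet> (P *v (y + t *\<^sub>R ?z))"
      using assms(2) psd_matrix_def by blast
    also have "\<dots> = y \<bullet> (P *v y) + t * (y \<bullet> (P *v ?z)) + t * (?z \<bullet> ?z) + t^2 * (?z \<bullet> (P *v ?z))"
      by (simp add: algebra_simps inner_add_left inner_add_right power2_eq_square)
    also have "y \<bullet> (P *v ?z) = ?z \<bullet> ?z"
      by (rule symmetric_matrix_inner[OF assms(1)])
    finally show ?thesis using assms(3) by simp
  qed
  then have "?z \<bullet> ?z = 0" by (rule nonneg_quadratic_imp_linear_coeff_0)
  then show ?thesis by simp
qed

lemma trace_sandwich_eq_sum:
  fixes D P :: "real^'n^'n"
  assumes "symmetric_matrix D"
  shows "trace (D ** P ** D) = (\<Sum>i\<in>UNIV. (D *v axis i 1) \<bullet> (P *v (D *v axis i 1)))"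
  by (simp add: trace_eq_sum_inner_axis matrix_vector_mul_assoc[symmetric]
      symmetric_matrix_inner[OF assms])

lemma trace_sandwich_nonneg:
  fixes D P :: "real^'n^'n"
  assumes "symmetric_matrix D" "psd_matrix P"
  shows "0 \<le> trace (D ** P ** D)"
  using assms(2) by (simp add: trace_sandwich_eq_sum[OF assms(1)] psd_matrix_def sum_nonneg)

lemma trace_sandwich_eq_0D:
  fixes D P :: "real^'n^'n"
  assumes "symmetric_matrix D" "symmetric_matrix P" "psd_matrix P" "trace (D ** P ** D) = 0"
  shows "P ** D = 0"
proof (rule matrix_eq_0_if_columns_0)
  fix i
  have "\<forall>i\<in>UNIV. (D *v axis i 1) \<bullet> (P *v (D *v axis i (1::real))) = 0"
    using assms(3,4) unfolding trace_sandwich_eq_sum[OF assms(1)]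
    by (subst sum_nonneg_eq_0_iff[symmetric]) (auto simp: psd_matrix_def)
  then show "(P ** D) *v axis i 1 = 0"
    using psd_matrix_quadratic_form_eq_0D[OF assms(2,3)] by (simp add: matrix_vector_mul_assoc[symmetric])
qed

lemma psd_sqrt_unique:
  fixes S T :: "real^'n^'n"
  assumes S: "symmetric_matrix S" "psd_matrix S" and T: "symmetric_matrix T" "psd_matrix T"
    and eq: "S ** S = T ** T"
  shows "S = T"
proof -
  define D where "D = S - T"
  have D: "symmetric_matrix D" using S T by (simp add: D_def symmetric_matrix_diff)
  have "S ** D + D ** T = S ** S - T ** T"
    by (simp add: D_def matrix_diff_ldistrib matrix_diff_rdistrib)
  then have SD_DT: "S ** D + D ** T = 0" using eq by simp
  have "trace (D ** T ** D) = trace (D ** (D ** T))"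
    by (rule trace_mul_sym)
  then have "trace (D ** S ** D) + trace (D ** T ** D) = trace (D ** (S ** D + D ** T))"
    by (simp add: matrix_add_ldistrib trace_add matrix_mul_assoc)
  also have "\<dots> = 0" by (simp add: SD_DT trace_def)
  finally have "trace (D ** S ** D) = 0" "trace (D ** T ** D) = 0"
    using trace_sandwich_nonneg[OF D S(2)] trace_sandwich_nonneg[OF D T(2)] by linarith+
  then have "S ** D = 0" "T ** D = 0"
    using trace_sandwich_eq_0D D S T by blast+
  moreover have "D ** D = S ** D - T ** D"
    by (metis D_def matrix_diff_rdistrib)
  ultimately have DD: "D ** D = 0" by simp
  have "D *v x = 0" for x
  proof -
    have "(D *v x) \<bullet> (D *v x) = x \<bullet> ((D ** D) *v x)"
      by (simp add: symmetric_matrix_inner[OF D] matrix_vector_mul_assoc[symmetric])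
    then show ?thesis by (simp add: DD)
  qed
  then have "D = 0" by (simp add: matrix_eq)
  then show ?thesis by (simp add: D_def)
qed

lemma continuous_on_matrix_mult:
  fixes f :: "'a::topological_space \<Rightarrow> real^'n^'m" and g :: "'a \<Rightarrow> real^'p^'n"
  assumes "continuous_on S f" "continuous_on S g"
  shows "continuous_on S (\<lambda>x. f x ** g x)"
  unfolding matrix_matrix_mult_def
  by (intro continuous_on_vec_lambda continuous_on_sum continuous_on_mult continuous_on_component assms)

lemma continuous_on_matrix_vector_mult:
  fixes f :: "'a::topological_space \<Rightarrow> real^'n^'m" and g :: "'a \<Rightarrow> real^'n"
  assumes "continuous_on S f" "continuous_on S g"
  shows "continuous_on S (\<lambda>x. f x *v g x)"
  unfolding matrix_vector_mult_def
  by (intro continuous_on_vec_lambda continuous_on_sum continuous_on_mult continuous_on_component assms)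

lemma continuous_on_transpose:
  fixes f :: "'a::topological_space \<Rightarrow> real^'n^'m"
  assumes "continuous_on S f"
  shows "continuous_on S (\<lambda>x. transpose (f x))"
  unfolding transpose_def
  by (intro continuous_on_vec_lambda continuous_on_component assms)

lemma tendsto_matrix_mult:
  fixes f :: "'a \<Rightarrow> real^'n^'m" and g :: "'a \<Rightarrow> real^'p^'n"
  assumes "(f \<longlongrightarrow> A) F" "(g \<longlongrightarrow> B) F"
  shows "((\<lambda>x. f x ** g x) \<longlongrightarrow> A ** B) F"
  unfolding matrix_matrix_mult_def
  by (intro tendsto_vec_lambda tendsto_sum tendsto_mult tendsto_vec_nth assms)

lemma closed_symmetric_matrices: "closed {X::real^'n^'n. symmetric_matrix X}"
  unfolding symmetric_matrix_def
  by (rule closed_Collect_eq[OF continuous_on_transpose[OF continuous_on_id] continuous_on_id])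

lemma closed_psd_matrices: "closed {X::real^'n^'n. symmetric_matrix X \<and> psd_matrix X}"
proof -
  have "{X::real^'n^'n. symmetric_matrix X \<and> psd_matrix X}
      = {X. symmetric_matrix X} \<inter> (\<Inter>x. {X. 0 \<le> x \<bullet> (X *v x)})"
    unfolding psd_matrix_def by blast
  moreover have "closed {X::real^'n^'n. 0 \<le> x \<bullet> (X *v x)}" for x
    by (rule closed_Collect_le[OF continuous_on_const continuous_on_inner[OF continuous_on_const
          continuous_on_matrix_vector_mult[OF continuous_on_id continuous_on_const]]])
  ultimately show ?thesis using closed_symmetric_matrices by (auto intro!: closed_Int closed_INT)
qed

section \<open>Operator norm bounds\<close>

definition op_bounded :: "real^'n^'m \<Rightarrow> real \<Rightarrow> bool" where
  "op_bounded A c \<longleftrightarrow> (\<forall>x. norm (A *v x) \<le> c * norm x)"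

lemma op_bounded_add:
  assumes "op_bounded A a" "op_bounded B b"
  shows "op_bounded (A + B) (a + b)"
  unfolding op_bounded_def
proof
  fix x
  have "norm ((A + B) *v x) \<le> norm (A *v x) + norm (B *v x)"
    by (simp add: matrix_vector_mult_add_rdistrib norm_triangle_ineq)
  also have "\<dots> \<le> a * norm x + b * norm x"
    using assms unfolding op_bounded_def by (intro add_mono) auto
  finally show "norm ((A + B) *v x) \<le> (a + b) * norm x" by (simp add: distrib_right)
qed

lemma op_bounded_diff:
  assumes "op_bounded A a" "op_bounded B b"
  shows "op_bounded (A - B) (a + b)"
  unfolding op_bounded_def
proof
  fix x
  have "norm ((A - B) *v x) \<le> norm (A *v x) + norm (B *v x)"
    by (simp add: matrix_vector_mult_diff_rdistrib norm_triangle_ineq4)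
  also have "\<dots> \<le> a * norm x + b * norm x"
    using assms unfolding op_bounded_def by (intro add_mono) auto
  finally show "norm ((A - B) *v x) \<le> (a + b) * norm x" by (simp add: distrib_right)
qed

lemma op_bounded_mult:
  "op_bounded A a \<Longrightarrow> op_bounded B b \<Longrightarrow> 0 \<le> a \<Longrightarrow> op_bounded (A ** B) (a * b)"
  unfolding op_bounded_def
  by (metis (no_types, opaque_lifting) matrix_vector_mul_assoc mult.assoc mult_left_mono order_trans)

lemma op_bounded_scaleR: "op_bounded A a \<Longrightarrow> op_bounded (c *\<^sub>R A) (\<bar>c\<bar> * a)"
  unfolding op_bounded_def by (simp add: scaleR_matrix_vector_assoc[symmetric] mult.assoc mult_left_mono)

lemma op_bounded_mono: "op_bounded A a \<Longrightarrow> a \<le> b \<Longrightarrow> op_bounded A b"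
  unfolding op_bounded_def by (meson mult_right_mono norm_ge_zero order_trans)

lemma op_bounded_onorm: "op_bounded A (onorm ((*v) A))"
  unfolding op_bounded_def using onorm[OF matrix_vector_mul_bounded_linear] by blast

lemma onorm_le_op_bound: "op_bounded A c \<Longrightarrow> onorm ((*v) A) \<le> c"
  unfolding op_bounded_def by (rule onorm_le) blast

lemma op_bounded_nonneg:
  assumes "op_bounded (A::real^'n^'m) c"
  shows "0 \<le> c"
proof -
  have "norm (A *v axis i 1) \<le> c * norm (axis i (1::real))" for i :: 'n
    using assms unfolding op_bounded_def by blast
  then have "norm (A *v axis i 1) \<le> c" for i :: 'n
    by simp
  then show ?thesis by (rule order_trans[OF norm_ge_zero])
qed

lemma op_bounded_transpose:
  fixes A :: "real^'n^'m"
  assumes "op_bounded A c"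
  shows "op_bounded (transpose A) c"
  unfolding op_bounded_def
proof
  fix v :: "real^'m"
  let ?w = "transpose A *v v"
  have "norm ?w ^ 2 = ?w \<bullet> ?w" by (simp add: power2_norm_eq_inner)
  also have "\<dots> = v \<bullet> (A *v ?w)" by (rule inner_matrix_vector_mult_transpose[symmetric])
  also have "\<dots> \<le> norm v * norm (A *v ?w)"
    by (rule Cauchy_Schwarz_ineq2[THEN order_trans[OF abs_ge_self]])
  also have "\<dots> \<le> norm v * (c * norm ?w)"
    using assms unfolding op_bounded_def by (simp add: mult_left_mono)
  finally have "norm ?w * norm ?w \<le> norm ?w * (c * norm v)"
    by (simp add: power2_eq_square mult_ac)
  then show "norm ?w \<le> c * norm v"
    using op_bounded_nonneg[OF assms] by (cases "norm ?w = 0") (auto simp: mult_le_cancel_left)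
qed

lemma norm_vec_power2: "norm (v::('a::real_normed_vector)^'n)^2 = (\<Sum>i\<in>UNIV. norm (v$i)^2)"
  by (simp add: norm_vec_def L2_set_def sum_nonneg)

lemma norm_matrix_power2_columns: "norm (M::real^'n^'m)^2 = (\<Sum>j\<in>UNIV. norm (column j M)^2)"
proof -
  have "(\<Sum>j\<in>UNIV. norm (column j M)^2) = (\<Sum>j\<in>UNIV. \<Sum>i\<in>UNIV. (M$i$j)^2)"
    by (simp add: norm_vec_power2 column_def)
  also have "\<dots> = (\<Sum>i\<in>UNIV. \<Sum>j\<in>UNIV. (M$i$j)^2)" by (rule sum.swap)
  finally show ?thesis by (simp add: norm_vec_power2)
qed

lemma norm_transpose: "norm (transpose (M::real^'n^'m)) = norm M"
proof -
  have "norm (transpose M)^2 = (\<Sum>i\<in>UNIV. \<Sum>j\<in>UNIV. (M$j$i)^2)"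
    by (simp add: norm_vec_power2 transpose_def)
  also have "\<dots> = norm M^2" by (subst sum.swap) (simp add: norm_vec_power2)
  finally have "norm (transpose M)^2 = norm M^2" .
  then show ?thesis by (simp add: power2_eq_iff_nonneg)
qed

lemma op_bounded_norm: "op_bounded (A::real^'n^'m) (norm A)"
  unfolding op_bounded_def
proof
  fix x :: "real^'n"
  have "norm (A *v x) ^ 2 = (\<Sum>i\<in>UNIV. ((A *v x) $ i)^2)" by (simp add: norm_vec_power2)
  also have "\<dots> \<le> (\<Sum>i\<in>UNIV. (norm (A $ i) * norm x)^2)"
  proof (rule sum_mono)
    fix i
    have "\<bar>(A *v x) $ i\<bar> \<le> norm (A $ i) * norm x"
      by (simp add: matrix_vector_mul_component Cauchy_Schwarz_ineq2)
    then show "((A *v x) $ i)^2 \<le> (norm (A $ i) * norm x)^2"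
      by (metis abs_ge_zero power2_abs power_mono)
  qed
  also have "\<dots> = (norm A * norm x)^2"
    by (simp add: power_mult_distrib sum_distrib_right norm_vec_power2[of A])
  finally show "norm (A *v x) \<le> norm A * norm x"
    by (rule power2_le_imp_le) simp
qed

lemma norm_le_op_bound:
  fixes A :: "real^'n^'m"
  assumes "op_bounded A c"
  shows "norm A \<le> sqrt (real CARD('n)) * c"
proof -
  have "norm (A *v axis j 1) \<le> c * norm (axis j (1::real))" for j
    using assms unfolding op_bounded_def by blast
  then have "norm (column j A)^2 \<le> c^2" for j
    by (intro power_mono) (auto simp: matrix_vector_mult_basis)
  then have "(\<Sum>j\<in>UNIV. norm (column j A)^2) \<le> (\<Sum>j\<in>(UNIV::'n set). c^2)"
    by (intro sum_mono)
  then have "norm A ^ 2 \<le> real CARD('n) * c^2"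
    by (simp add: norm_matrix_power2_columns[of A])
  then have "norm A \<le> sqrt (real CARD('n) * c^2)" by (rule real_le_rsqrt)
  also have "\<dots> = sqrt (real CARD('n)) * c"
    using op_bounded_nonneg[OF assms] by (simp add: real_sqrt_mult)
  finally show ?thesis .
qed

lemma column_matrix_mult: "column j (A ** B) = A *v column j (B::real^'p^'n)"
  by (simp add: column_def matrix_vector_mult_def matrix_matrix_mult_def vec_eq_iff)

lemma norm_matrix_mult_le:
  fixes A :: "real^'n^'m" and B :: "real^'p^'n"
  assumes "op_bounded A c"
  shows "norm (A ** B) \<le> c * norm B"
proof -
  have "norm (A ** B)^2 = (\<Sum>j\<in>UNIV. norm (A *v column j B)^2)"
    by (simp only: norm_matrix_power2_columns column_matrix_mult)
  also have "\<dots> \<le> (\<Sum>j\<in>UNIV. (c * norm (column j B))^2)"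
    using assms unfolding op_bounded_def by (intro sum_mono power_mono) auto
  also have "\<dots> = c^2 * (\<Sum>j\<in>UNIV. norm (column j B)^2)"
    by (simp add: power_mult_distrib sum_distrib_left)
  also have "\<dots> = (c * norm B)^2"
    by (metis norm_matrix_power2_columns power_mult_distrib)
  finally show ?thesis
    by (rule power2_le_imp_le) (simp add: op_bounded_nonneg[OF assms])
qed

lemma norm_matrix_mult_le_right:
  fixes A :: "real^'n^'m" and B :: "real^'p^'n"
  assumes "op_bounded (transpose B) c"
  shows "norm (A ** B) \<le> c * norm A"
  using norm_matrix_mult_le[OF assms, of "transpose A"]
  by (simp add: norm_transpose matrix_transpose_mul[symmetric])

lemma symmetric_op_bounded_quadratic_form:
  fixes M :: "real^'n^'n"
  assumes M: "symmetric_matrix M" and q: "\<And>x. \<bar>x \<bullet> (M *v x)\<bar> \<le> m * (x \<bullet> x)" and m: "0 \<le> m"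
  shows "op_bounded M m"
  unfolding op_bounded_def
proof
  fix x :: "real^'n"
  show "norm (M *v x) \<le> m * norm x"
  proof (cases "M *v x = 0")
    case True
    then show ?thesis using m by simp
  next
    case False
    \<comment> \<open>polarization with y the multiple of M x of the same length as x\<close>
    define y where "y = (norm x / norm (M *v x)) *\<^sub>R (M *v x)"
    have "norm y = norm x" using False by (simp add: y_def)
    then have yy: "y \<bullet> y = x \<bullet> x" by (metis power2_norm_eq_inner)
    have xMy: "x \<bullet> (M *v y) = norm x * norm (M *v x)"
    proof -
      have "x \<bullet> (M *v y) = (norm x / norm (M *v x)) * ((M *v x) \<bullet> (M *v x))"
        by (simp add: y_def matrix_vector_mult_scaleR symmetric_matrix_inner[OF M])
      then show ?thesis using False by (simp add: power2_norm_eq_inner[symmetric] power2_eq_square)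
    qed
    have yMx: "y \<bullet> (M *v x) = x \<bullet> (M *v y)"
      using symmetric_matrix_inner[OF M, of y x] by (simp add: inner_commute)
    have "4 * (x \<bullet> (M *v y)) = (x + y) \<bullet> (M *v (x + y)) - (x - y) \<bullet> (M *v (x - y))"
      using yMx by (simp add: matrix_vector_right_distrib matrix_vector_mult_diff_distrib
          inner_add_left inner_add_right inner_diff_left inner_diff_right)
    also have "\<dots> \<le> m * ((x + y) \<bullet> (x + y) + (x - y) \<bullet> (x - y))"
      using q[of "x + y"] q[of "x - y"] by (simp add: abs_le_iff distrib_left)
    also have "(x + y) \<bullet> (x + y) + (x - y) \<bullet> (x - y) = 4 * (x \<bullet> x)"
      using yy by (simp add: inner_add_left inner_add_right inner_diff_left inner_diff_right inner_commute)
    finally have "norm x * norm (M *v x) \<le> norm x * (m * norm x)"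
      by (simp add: xMy power2_norm_eq_inner[symmetric] power2_eq_square mult_ac)
    then show ?thesis using False by (cases "x = 0") auto
  qed
qed

section \<open>Existence of the square root\<close>

lemma closed_op_bounded_symmetric: "closed {X::real^'n^'n. symmetric_matrix X \<and> op_bounded X r}"
proof -
  have "{X::real^'n^'n. symmetric_matrix X \<and> op_bounded X r}
      = {X. symmetric_matrix X} \<inter> (\<Inter>x. {X. norm (X *v x) \<le> r * norm x})"
    by (auto simp: op_bounded_def)
  moreover have "closed {X::real^'n^'n. norm (X *v x) \<le> r * norm x}" for x
    by (rule closed_Collect_le[OF continuous_on_norm[OF continuous_on_matrix_vector_mult[OF
          continuous_on_id continuous_on_const]] continuous_on_const])
  ultimately show ?thesis using closed_symmetric_matrices by (auto intro!: closed_Int closed_INT)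
qed

lemma sqrt_id_minus_exists:
  fixes M :: "real^'n^'n"
  assumes M: "symmetric_matrix M" "op_bounded M m" and m: "m < 1"
  shows "\<exists>S. symmetric_matrix S \<and> psd_matrix S \<and> S ** S = mat 1 - M"
proof -
  \<comment> \<open>(I - X) ** (I - X) = I - M iff X = (M + X ** X) / 2; this map is a contraction on the
    symmetric matrices of operator norm at most r, the smaller root of r = (m + r * r) / 2\<close>
  define r where "r = 1 - sqrt (1 - m)"
  have m0: "0 \<le> m" by (rule op_bounded_nonneg[OF M(2)])
  have "sqrt (1 - m)^2 = 1 - m" using m by simp
  then have r: "0 \<le> r" "r < 1" "m + r * r = 2 * r"
    using m0 m by (auto simp: r_def algebra_simps power2_eq_square)
  define K where "K = {X::real^'n^'n. symmetric_matrix X \<and> op_bounded X r}"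
  define f where "f X = (1/2) *\<^sub>R (M + X ** X)" for X :: "real^'n^'n"
  have "Topological_Spaces.complete K"
    unfolding K_def using closed_op_bounded_symmetric complete_eq_closed by blast
  moreover have "K \<noteq> {}"
    using symmetric_matrix_mat[of 0] r by (auto simp: K_def op_bounded_def)
  moreover have "f ` K \<subseteq> K"
  proof
    fix Y assume "Y \<in> f ` K"
    then obtain X where X: "symmetric_matrix X" "op_bounded X r" and Y: "Y = f X"
      by (auto simp: K_def)
    have "symmetric_matrix Y"
      unfolding Y f_def by (intro symmetric_matrix_scaleR symmetric_matrix_add M symmetric_matrix_square X)
    moreover have "op_bounded Y (\<bar>1/2\<bar> * (m + r * r))"
      unfolding Y f_def by (intro op_bounded_scaleR op_bounded_add op_bounded_mult M X r)
    ultimately show "Y \<in> K" using r by (simp add: K_def)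
  qed
  moreover have "dist (f X) (f Y) \<le> r * dist X Y" if "X \<in> K" "Y \<in> K" for X Y
  proof -
    have X: "op_bounded X r" and Y: "symmetric_matrix Y" "op_bounded Y r"
      using that by (auto simp: K_def)
    have "f X - f Y = (1/2) *\<^sub>R (X ** (X - Y) + (X - Y) ** Y)"
      by (simp add: f_def matrix_diff_ldistrib matrix_diff_rdistrib algebra_simps)
    moreover have "norm (X ** (X - Y)) \<le> r * norm (X - Y)"
      by (rule norm_matrix_mult_le[OF X])
    moreover have "norm ((X - Y) ** Y) \<le> r * norm (X - Y)"
      using Y by (intro norm_matrix_mult_le_right) (simp add: symmetric_matrix_def)
    ultimately show ?thesis
      using norm_triangle_ineq[of "X ** (X - Y)" "(X - Y) ** Y"] by (simp add: dist_norm)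
  qed
  ultimately obtain X where "X \<in> K" and fX: "f X = X"
    using Banach_fix[of K r f] r by blast
  then have X: "symmetric_matrix X" "op_bounded X r" by (auto simp: K_def)
  have "2 *\<^sub>R X = M + X ** X"
    using arg_cong[OF fX, of "scaleR 2"] by (simp add: f_def)
  then have XX: "X ** X = 2 *\<^sub>R X - M" by (simp add: algebra_simps)
  define S where "S = mat 1 - X"
  have "S ** S = mat 1 - M"
    by (simp add: S_def matrix_diff_ldistrib matrix_diff_rdistrib XX scaleR_2 algebra_simps)
  moreover have "symmetric_matrix S"
    unfolding S_def by (intro symmetric_matrix_diff symmetric_matrix_mat X)
  moreover have "psd_matrix S"
    unfolding psd_matrix_def
  proof
    fix x :: "real^'n"
    have "x \<bullet> (X *v x) \<le> norm x * norm (X *v x)"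
      by (rule Cauchy_Schwarz_ineq2[THEN order_trans[OF abs_ge_self]])
    also have "\<dots> \<le> norm x * (r * norm x)"
      using X(2) unfolding op_bounded_def by (simp add: mult_left_mono)
    also have "\<dots> \<le> norm x * norm x"
      using r by (intro mult_left_mono mult_left_le_one_le) auto
    also have "\<dots> = x \<bullet> x" by (simp add: dot_square_norm power2_eq_square)
    finally show "0 \<le> x \<bullet> (S *v x)"
      by (simp add: S_def matrix_vector_mult_diff_rdistrib inner_diff_right)
  qed
  ultimately show ?thesis by blast
qed

lemma psd_sqrt_exists_pos_def:
  fixes A :: "real^'n^'n"
  assumes A: "symmetric_matrix A" "psd_matrix A" and e: "0 < e"
  shows "\<exists>S. symmetric_matrix S \<and> psd_matrix S \<and> S ** S = A + e *\<^sub>R mat 1"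
proof -
  \<comment> \<open>rescale B = A + e I so that I - B / L is a contraction\<close>
  define B where "B = A + e *\<^sub>R mat 1"
  define L where "L = onorm ((*v) A) + e"
  define M where "M = mat 1 - (1/L) *\<^sub>R B"
  have "0 \<le> onorm ((*v) A)" by (rule onorm_pos_le[OF matrix_vector_mul_bounded_linear])
  then have L: "0 < L" "e \<le> L" using e by (auto simp: L_def)
  have B: "symmetric_matrix B" unfolding B_def by (intro symmetric_matrix_add A symmetric_matrix_scaleR symmetric_matrix_mat)
  have M: "symmetric_matrix M" unfolding M_def by (intro symmetric_matrix_diff symmetric_matrix_mat symmetric_matrix_scaleR B)
  have "\<bar>x \<bullet> (M *v x)\<bar> \<le> (1 - e / L) * (x \<bullet> x)" for x
  proof -
    have xBx: "x \<bullet> (B *v x) = x \<bullet> (A *v x) + e * (x \<bullet> x)"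
      by (simp add: B_def matrix_vector_mult_add_rdistrib scaleR_matrix_vector_assoc[symmetric] inner_add_right)
    have "x \<bullet> (A *v x) \<le> norm x * norm (A *v x)"
      by (rule Cauchy_Schwarz_ineq2[THEN order_trans[OF abs_ge_self]])
    also have "\<dots> \<le> norm x * (onorm ((*v) A) * norm x)"
      using op_bounded_onorm[of A] unfolding op_bounded_def by (simp add: mult_left_mono)
    also have "\<dots> = onorm ((*v) A) * (x \<bullet> x)"
      by (simp add: power2_norm_eq_inner[symmetric] power2_eq_square)
    finally have "e * (x \<bullet> x) \<le> x \<bullet> (B *v x) \<and> x \<bullet> (B *v x) \<le> L * (x \<bullet> x)"
      using A(2) xBx unfolding psd_matrix_def by (auto simp: L_def distrib_right)
    moreover have "x \<bullet> (M *v x) = x \<bullet> x - (x \<bullet> (B *v x)) / L"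
      by (simp add: M_def matrix_vector_mult_diff_rdistrib scaleR_matrix_vector_assoc[symmetric] inner_diff_right)
    ultimately show ?thesis
      using L by (auto simp: abs_le_iff field_simps)
  qed
  then have "op_bounded M (1 - e / L)"
    using M L by (intro symmetric_op_bounded_quadratic_form) auto
  then obtain S0 where S0: "symmetric_matrix S0" "psd_matrix S0" "S0 ** S0 = mat 1 - M"
    using sqrt_id_minus_exists[OF M] e L by fastforce
  define S where "S = sqrt L *\<^sub>R S0"
  have "S ** S = B"
    using L S0(3) by (simp add: S_def M_def matrix_scalar_ac scalar_matrix_assoc[symmetric])
  moreover have "symmetric_matrix S" "psd_matrix S"
    unfolding S_def using S0 L by (auto intro: symmetric_matrix_scaleR psd_matrix_scaleR)
  ultimately show ?thesis unfolding B_def by blast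
qed

lemma norm_power2_eq_trace_square: "symmetric_matrix (S::real^'n^'n) \<Longrightarrow> norm S ^ 2 = trace (S ** S)"
  unfolding norm_vec_power2 trace_def matrix_matrix_mult_def symmetric_matrix_def
  by (metis (no_types, lifting) real_norm_def power2_abs power2_eq_square sum.cong transpose_def vec_lambda_beta)

lemma psd_sqrt_exists:
  fixes A :: "real^'n^'n"
  assumes A: "symmetric_matrix A" "psd_matrix A"
  shows "\<exists>S. symmetric_matrix S \<and> psd_matrix S \<and> S ** S = A"
proof -
  \<comment> \<open>a limit point of square roots of A + I / (n + 1), which stay in a compact set\<close>
  have "\<forall>n. \<exists>S. symmetric_matrix S \<and> psd_matrix S \<and> S ** S = A + (1 / real (Suc n)) *\<^sub>R mat 1"
    using psd_sqrt_exists_pos_def[OF A] by simp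
  then obtain S where S: "\<And>n. symmetric_matrix (S n) \<and> psd_matrix (S n)
      \<and> S n ** S n = A + (1 / real (Suc n)) *\<^sub>R mat 1"
    by metis
  define R where "R = sqrt (\<bar>trace A\<bar> + real CARD('n))"
  have "norm (S n) \<le> R" for n
  proof -
    have "norm (S n) ^ 2 = trace A + (1 / real (Suc n)) * real CARD('n)"
      using S[of n] by (simp add: norm_power2_eq_trace_square trace_add trace_def mat_def sum.distrib)
    also have "\<dots> \<le> \<bar>trace A\<bar> + real CARD('n)"
      by (intro add_mono) (auto simp: field_simps)
    finally show ?thesis unfolding R_def by (rule real_le_rsqrt)
  qed
  then have "\<forall>n. S n \<in> cball 0 R \<inter> {X. symmetric_matrix X \<and> psd_matrix X}"
    using S by auto
  moreover have "compact (cball (0::real^'n^'n) R \<inter> {X. symmetric_matrix X \<and> psd_matrix X})"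
    by (intro compact_Int_closed compact_cball closed_psd_matrices)
  ultimately obtain T r where T: "symmetric_matrix T" "psd_matrix T"
    and r: "strict_mono r" and lim: "(S \<circ> r) \<longlonglongrightarrow> T"
    using compact_imp_seq_compact seq_compactE by (smt (verit) Int_Collect)
  have "(\<lambda>k. S (r k) ** S (r k)) \<longlonglongrightarrow> T ** T"
    using lim unfolding comp_def by (intro tendsto_matrix_mult)
  moreover have "(\<lambda>k. S (r k) ** S (r k)) \<longlonglongrightarrow> A"
  proof -
    have "(\<lambda>n. 1 / real (Suc n)) \<longlonglongrightarrow> 0" by (rule LIMSEQ_Suc[OF lim_const_over_n])
    then have "(\<lambda>k. 1 / real (Suc (r k))) \<longlonglongrightarrow> 0"
      using LIMSEQ_subseq_LIMSEQ[OF _ r] unfolding comp_def by blast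
    then have "(\<lambda>k. A + (1 / real (Suc (r k))) *\<^sub>R mat 1) \<longlonglongrightarrow> A + 0 *\<^sub>R (mat 1::real^'n^'n)"
      by (intro tendsto_intros)
    then show ?thesis using S by simp
  qed
  ultimately have "T ** T = A" using LIMSEQ_unique by fastforce
  then show ?thesis using T by blast
qed

lemma psd_sqrt:
  fixes A :: "real^'n^'n"
  assumes "symmetric_matrix A" "psd_matrix A"
  shows "symmetric_matrix (psd_sqrt A)" "psd_matrix (psd_sqrt A)" "psd_sqrt A ** psd_sqrt A = A"
proof -
  have "\<exists>!S. symmetric_matrix S \<and> psd_matrix S \<and> S ** S = A"
    using psd_sqrt_exists[OF assms] psd_sqrt_unique by metis
  then have "symmetric_matrix (psd_sqrt A) \<and> psd_matrix (psd_sqrt A) \<and> psd_sqrt A ** psd_sqrt A = A"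
    unfolding psd_sqrt_def symmetric_matrix_def[symmetric] psd_matrix_def[symmetric] by (rule theI')
  then show "symmetric_matrix (psd_sqrt A)" "psd_matrix (psd_sqrt A)" "psd_sqrt A ** psd_sqrt A = A"
    by auto
qed

section \<open>Measurability of the Stiefel map\<close>

lemma continuous_on_closed_graph_bounded:
  fixes f :: "'a::euclidean_space \<Rightarrow> 'b::euclidean_space"
  assumes "closed S" "closed G"
    and graph: "\<And>x y. x \<in> S \<Longrightarrow> (x, y) \<in> G \<longleftrightarrow> y = f x"
    and bound: "\<And>x. x \<in> S \<Longrightarrow> norm (f x) \<le> B"
  shows "continuous_on S f"
proof (rule continuous_from_closed_graph[OF compact_cball[of 0 B]])
  show "f \<in> S \<rightarrow> cball 0 B" using bound by auto
  have "(\<lambda>x. (x, f x)) ` S = (S \<times> UNIV) \<inter> G" using graph by auto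
  then show "closed ((\<lambda>x. (x, f x)) ` S)" using assms(1,2) by (simp add: closed_Int closed_Times)
qed

lemma norm_psd_sqrt_le:
  fixes A :: "real^'n^'n"
  assumes "symmetric_matrix A" "psd_matrix A"
  shows "norm (psd_sqrt A) \<le> sqrt (real CARD('n) * norm A)"
proof -
  have "norm (psd_sqrt A) ^ 2 = trace A"
    using norm_power2_eq_trace_square[OF psd_sqrt(1)[OF assms]] psd_sqrt(3)[OF assms] by simp
  also have "\<dots> \<le> (\<Sum>i\<in>(UNIV::'n set). norm A)"
    unfolding trace_def
  proof (rule sum_mono)
    fix i
    show "A $ i $ i \<le> norm A"
      using Finite_Cartesian_Product.norm_nth_le[of "A $ i" i] Finite_Cartesian_Product.norm_nth_le[of A i] abs_ge_self[of "A $ i $ i"]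
      unfolding real_norm_def by linarith
  qed
  finally show ?thesis by (intro real_le_rsqrt) simp
qed

lemma continuous_on_psd_sqrt:
  "continuous_on (cball 0 R \<inter> {A::real^'n^'n. symmetric_matrix A \<and> psd_matrix A}) psd_sqrt"
proof (rule continuous_on_closed_graph_bounded)
  let ?G = "(UNIV \<times> {X::real^'n^'n. symmetric_matrix X \<and> psd_matrix X}) \<inter> {p. snd p ** snd p = fst p}"
  show "closed ?G"
    by (intro closed_Int closed_Times closed_UNIV closed_psd_matrices closed_Collect_eq
        continuous_on_matrix_mult continuous_on_fst continuous_on_snd continuous_on_id)
  show "(A, S) \<in> ?G \<longleftrightarrow> S = psd_sqrt A"
    if "A \<in> cball 0 R \<inter> {A. symmetric_matrix A \<and> psd_matrix A}" for A S :: "real^'n^'n"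
  proof -
    have A: "symmetric_matrix A" "psd_matrix A" using that by auto
    show ?thesis using psd_sqrt[OF A] psd_sqrt_unique[of S "psd_sqrt A"] by auto
  qed
  show "norm (psd_sqrt A) \<le> sqrt (real CARD('n) * R)"
    if "A \<in> cball 0 R \<inter> {A. symmetric_matrix A \<and> psd_matrix A}" for A :: "real^'n^'n"
  proof -
    have A: "symmetric_matrix A" "psd_matrix A" "norm A \<le> R" using that by auto
    have "norm (psd_sqrt A) \<le> sqrt (real CARD('n) * norm A)" by (rule norm_psd_sqrt_le[OF A(1,2)])
    also have "\<dots> \<le> sqrt (real CARD('n) * R)" using A(3) by (simp add: mult_left_mono)
    finally show ?thesis .
  qed
qed (intro closed_Int closed_cball closed_psd_matrices)

lemma norm_gram_le: "norm (transpose Z ** (Z::real^'r^'d)) \<le> norm Z * norm Z"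
  using norm_matrix_mult_le[OF op_bounded_norm] by (metis norm_transpose)

lemma continuous_psd_sqrt_gram: "continuous_on UNIV (\<lambda>Z::real^'r^'d. psd_sqrt (transpose Z ** Z))"
proof (rule continuous_at_imp_continuous_on, rule ballI)
  fix Z :: "real^'r^'d"
  let ?R = "norm Z + 1"
  have "continuous_on (ball 0 ?R) (\<lambda>Z::real^'r^'d. psd_sqrt (transpose Z ** Z))"
  proof (rule continuous_on_compose2[OF continuous_on_psd_sqrt[of "?R * ?R"]])
    show "continuous_on (ball 0 ?R) (\<lambda>Z::real^'r^'d. transpose Z ** Z)"
      by (intro continuous_on_matrix_mult continuous_on_transpose continuous_on_id)
    show "(\<lambda>Z::real^'r^'d. transpose Z ** Z) ` ball 0 ?R
        \<subseteq> cball 0 (?R * ?R) \<inter> {A. symmetric_matrix A \<and> psd_matrix A}"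
    proof safe
      fix W :: "real^'r^'d"
      assume "W \<in> ball 0 ?R"
      then have "norm W * norm W \<le> ?R * ?R" by (intro mult_mono) auto
      then show "transpose W ** W \<in> cball 0 (?R * ?R)"
        using norm_gram_le[of W] by simp
    qed (simp_all add: symmetric_matrix_gram psd_matrix_gram)
  qed
  moreover have "Z \<in> ball 0 ?R" by simp
  ultimately show "isCont (\<lambda>Z::real^'r^'d. psd_sqrt (transpose Z ** Z)) Z"
    using continuous_on_eq_continuous_at[OF open_ball] by blast
qed

lemma matrix_inv:
  assumes "invertible (A::'a::semiring_1^'n^'m)"
  shows "A ** matrix_inv A = mat 1" "matrix_inv A ** A = mat 1"
  using someI_ex[OF assms[unfolded invertible_def]] by (simp_all add: matrix_inv_def)

lemma matrix_inv_not_invertible: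
  assumes "\<not> invertible A"
  shows "matrix_inv A = (SOME _. False)"
proof -
  have "(\<lambda>A'. A ** A' = mat 1 \<and> A' ** A = mat 1) = (\<lambda>_. False)"
    using assms unfolding invertible_def by auto
  then show ?thesis unfolding matrix_inv_def by simp
qed

definition bounded_below_matrices :: "real \<Rightarrow> (real^'n^'n) set" where
  "bounded_below_matrices K = {A. \<forall>x. norm x \<le> K * norm (A *v x)}"

lemma bounded_below_matrix_inv:
  fixes A :: "real^'n^'n"
  assumes "A \<in> bounded_below_matrices K"
  shows "invertible A" "op_bounded (matrix_inv A) K"
proof -
  have below: "norm x \<le> K * norm (A *v x)" for x
    using assms by (simp add: bounded_below_matrices_def)
  have "inj ((*v) A)"
  proof (rule injI)
    fix x y assume "A *v x = A *v y"
    then show "x = y" using below[of "x - y"] by (simp add: matrix_vector_mult_diff_distrib)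
  qed
  then show inv: "invertible A"
    using matrix_left_invertible_injective invertible_left_inverse by blast
  show "op_bounded (matrix_inv A) K"
    unfolding op_bounded_def
    using below[of "matrix_inv A *v y" for y] by (simp add: matrix_vector_mul_assoc matrix_inv[OF inv])
qed

lemma closed_bounded_below_matrices: "closed (bounded_below_matrices K :: (real^'n^'n) set)"
proof -
  have "bounded_below_matrices K = (\<Inter>x. {A::real^'n^'n. norm x \<le> K * norm (A *v x)})"
    by (auto simp: bounded_below_matrices_def)
  moreover have "closed {A::real^'n^'n. norm x \<le> K * norm (A *v x)}" for x
    by (intro closed_Collect_le continuous_on_const continuous_on_mult continuous_on_norm
        continuous_on_matrix_vector_mult continuous_on_id)
  ultimately show ?thesis by auto
qed

lemma continuous_on_matrix_inv:
  "continuous_on (bounded_below_matrices K :: (real^'n^'n) set) matrix_inv"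
proof (rule continuous_on_closed_graph_bounded)
  show "closed {p::(real^'n^'n) \<times> (real^'n^'n). fst p ** snd p = mat 1}"
    by (intro closed_Collect_eq continuous_on_matrix_mult continuous_on_fst continuous_on_snd
        continuous_on_id continuous_on_const)
  show "(A, B) \<in> {p. fst p ** snd p = mat 1} \<longleftrightarrow> B = matrix_inv A"
    if "A \<in> bounded_below_matrices K" for A B :: "real^'n^'n"
    using matrix_inv[OF bounded_below_matrix_inv(1)[OF that]]
    by (auto simp: matrix_mul_assoc) (metis matrix_mul_assoc matrix_mul_lid)
  show "norm (matrix_inv A) \<le> sqrt (real CARD('n)) * K"
    if "A \<in> bounded_below_matrices K" for A :: "real^'n^'n"
    by (rule norm_le_op_bound[OF bounded_below_matrix_inv(2)[OF that]])
qed (rule closed_bounded_below_matrices)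

lemma invertible_imp_ball_bounded_below:
  fixes A :: "real^'n^'n"
  assumes "invertible A"
  obtains K e where "0 < e" "ball A e \<subseteq> bounded_below_matrices K"
proof -
  define K where "K = norm (matrix_inv A) + 1"
  have K: "0 < K" by (simp add: K_def add_nonneg_pos)
  have below: "norm x \<le> K * norm (A *v x)" for x
  proof -
    have "norm x = norm (matrix_inv A *v (A *v x))"
      by (simp add: matrix_vector_mul_assoc matrix_inv(2)[OF assms])
    also have "\<dots> \<le> norm (matrix_inv A) * norm (A *v x)"
      using op_bounded_norm unfolding op_bounded_def by blast
    also have "\<dots> \<le> K * norm (A *v x)" by (simp add: K_def distrib_right)
    finally show ?thesis .
  qed
  have "C \<in> bounded_below_matrices (2 * K)" if "C \<in> ball A (1 / (2 * K))" for C
    unfolding bounded_below_matrices_def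
  proof (intro CollectI allI)
    fix x
    have "norm (A - C) < 1 / (2 * K)" using that by (simp add: dist_norm)
    then have AC: "K * norm (A - C) \<le> 1 / 2" using K by (simp add: field_simps)
    have "norm ((A - C) *v x) \<le> norm (A - C) * norm x"
      using op_bounded_norm[of "A - C"] unfolding op_bounded_def by blast
    then have "K * norm ((A - C) *v x) \<le> (K * norm (A - C)) * norm x"
      using K by (simp add: mult.assoc mult_left_mono)
    also have "\<dots> \<le> norm x / 2" using mult_right_mono[OF AC norm_ge_zero[of x]] by simp
    finally have "K * norm ((A - C) *v x) \<le> norm x / 2" .
    moreover have "norm (A *v x) \<le> norm (C *v x) + norm ((A - C) *v x)"
      by (metis add.commute diff_add_cancel matrix_vector_mult_diff_rdistrib norm_triangle_ineq)
    then have "K * norm (A *v x) \<le> K * norm (C *v x) + K * norm ((A - C) *v x)"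
      using K by (simp add: distrib_left[symmetric])
    ultimately show "norm x \<le> 2 * K * norm (C *v x)"
      using below[of x] by linarith
  qed
  then have "ball A (1 / (2 * K)) \<subseteq> bounded_below_matrices (2 * K)" by blast
  with K show ?thesis by (intro that) simp_all
qed

lemma isCont_matrix_inv:
  fixes A :: "real^'n^'n"
  assumes "invertible A"
  shows "isCont matrix_inv A"
proof -
  obtain K e where "0 < e" "ball A e \<subseteq> bounded_below_matrices K"
    using invertible_imp_ball_bounded_below[OF assms] .
  then have "A \<in> interior (bounded_below_matrices K)"
    by (meson centre_in_ball interior_maximal open_ball subsetD)
  then show ?thesis using continuous_on_interior[OF continuous_on_matrix_inv] by blast
qed

lemma open_invertible_matrices: "open {A::real^'n^'n. invertible A}"
  unfolding open_contains_ball
  by (metis (mono_tags) bounded_below_matrix_inv(1) invertible_imp_ball_bounded_below mem_Collect_eq subsetI subset_iff)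

lemma isCont_matrix_mult:
  fixes f :: "'a::t2_space \<Rightarrow> real^'n^'m" and g :: "'a \<Rightarrow> real^'p^'n"
  shows "isCont f x \<Longrightarrow> isCont g x \<Longrightarrow> isCont (\<lambda>x. f x ** g x) x"
  unfolding isCont_def by (rule tendsto_matrix_mult)

lemma borel_measurable_stiefel_map: "(stiefel_map :: real^'r^'d \<Rightarrow> _) \<in> borel_measurable borel"
proof -
  define h where "h Z = psd_sqrt (transpose Z ** Z)" for Z :: "real^'r^'d"
  define G where "G = h -` {A. invertible A}"
  have h: "isCont h Z" for Z
    using continuous_psd_sqrt_gram unfolding h_def continuous_on_eq_continuous_at[OF open_UNIV] by blast
  have G: "open G" unfolding G_def by (rule continuous_open_vimage[OF open_invertible_matrices h])
  have "continuous_on G (\<lambda>Z. Z ** matrix_inv (h Z))"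
    by (intro continuous_at_imp_continuous_on ballI isCont_matrix_mult continuous_ident
        isCont_o2[OF h isCont_matrix_inv])
      (simp_all add: G_def)
  moreover have "continuous_on (- G) (\<lambda>Z. Z ** (SOME _. False))"
    by (intro continuous_on_matrix_mult continuous_on_id continuous_on_const)
  ultimately have "(\<lambda>Z. if Z \<in> G then Z ** matrix_inv (h Z) else Z ** (SOME _. False)) \<in> borel_measurable borel"
    by (rule borel_measurable_continuous_on_if[OF borel_open[OF G]])
  moreover have "stiefel_map = (\<lambda>Z. if Z \<in> G then Z ** matrix_inv (h Z) else Z ** (SOME _. False))"
  proof
    fix Z
    show "stiefel_map Z = (if Z \<in> G then Z ** matrix_inv (h Z) else Z ** (SOME _. False))"
      by (cases "Z \<in> G") (simp_all add: stiefel_map_def h_def G_def matrix_inv_not_invertible)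
  qed
  ultimately show ?thesis by simp
qed

lemma continuous_onorm_matrix: "continuous_on UNIV (\<lambda>M::real^'n^'m. onorm ((*v) M))"
proof (rule lipschitz_on_continuous_on[where L=1], rule lipschitz_onI)
  have *: "onorm ((*v) M) \<le> onorm ((*v) N) + dist M N" for M N :: "real^'n^'m"
  proof (rule onorm_le_op_bound)
    have "op_bounded (N + (M - N)) (onorm ((*v) N) + norm (M - N))"
      by (intro op_bounded_add op_bounded_onorm op_bounded_norm)
    then show "op_bounded M (onorm ((*v) N) + dist M N)" by (simp add: dist_norm)
  qed
  show "dist (onorm ((*v) M)) (onorm ((*v) N)) \<le> 1 * dist M N" for M N :: "real^'n^'m"
    using *[of M N] *[of N M] by (simp add: dist_real_def dist_commute abs_le_iff)
qed simp

section \<open>Perturbation of the Stiefel map\<close>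

lemma stiefel_isometry:
  fixes U :: "real^'r^'d"
  assumes "transpose U ** U = mat 1"
  shows "norm (U *v x) = norm x"
proof -
  have "(U *v x) \<bullet> (U *v x) = x \<bullet> x"
    using inner_matrix_vector_mult_transpose[of x "transpose U" "U *v x"]
    by (simp add: matrix_vector_mul_assoc assms)
  then show ?thesis by (simp add: norm_eq_sqrt_inner)
qed

lemma op_bounded_psd_minus_id:
  fixes P :: "real^'n^'n"
  assumes P: "psd_matrix P" and PP: "op_bounded (P ** P - mat 1) a"
  shows "op_bounded (P - mat 1) a"
  unfolding op_bounded_def
proof
  fix x :: "real^'n"
  \<comment> \<open>(P + I) (P - I) = P P - I, and P + I dominates the identity\<close>
  define y where "y = (P - mat 1) *v x"
  have Py: "(P + mat 1) *v y = (P ** P - mat 1) *v x"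
    by (simp add: y_def matrix_vector_mul_assoc matrix_add_rdistrib matrix_diff_ldistrib)
  have "y \<bullet> y \<le> y \<bullet> ((P + mat 1) *v y)"
    using P unfolding psd_matrix_def by (simp add: matrix_vector_mult_add_rdistrib inner_add_right)
  also have "\<dots> \<le> norm y * norm ((P + mat 1) *v y)"
    by (rule Cauchy_Schwarz_ineq2[THEN order_trans[OF abs_ge_self]])
  also have "\<dots> \<le> norm y * (a * norm x)"
    using PP unfolding op_bounded_def Py by (simp add: mult_left_mono)
  finally have "norm y * norm y \<le> norm y * (a * norm x)"
    by (simp add: power2_norm_eq_inner[symmetric] power2_eq_square)
  then show "norm y \<le> a * norm x"
    using op_bounded_nonneg[OF PP] by (cases "norm y = 0") (auto simp: mult_le_cancel_left)
qed

lemma stiefel_map_perturb: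
  fixes U E :: "real^'r^'d"
  assumes U: "transpose U ** U = mat 1" and E: "op_bounded E \<delta>" and \<delta>: "\<delta> \<le> 1/16"
  shows "op_bounded (stiefel_map (U + E) - U) (8 * \<delta>)"
proof -
  define Z where "Z = U + E"
  define P where "P = psd_sqrt (transpose Z ** Z)"
  have P: "psd_matrix P" "P ** P = transpose Z ** Z"
    unfolding P_def using psd_sqrt[OF symmetric_matrix_gram psd_matrix_gram] by auto
  have \<delta>0: "0 \<le> \<delta>" by (rule op_bounded_nonneg[OF E])
  have oU: "op_bounded U 1" using stiefel_isometry[OF U] by (simp add: op_bounded_def)
  have oUt: "op_bounded (transpose U) 1" by (rule op_bounded_transpose[OF oU])
  have PP: "P ** P - mat 1 = transpose U ** E + transpose E ** U + transpose E ** E"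
    unfolding P Z_def using U by (simp add: transpose_add matrix_add_ldistrib matrix_add_rdistrib)
  have "op_bounded (P ** P - mat 1) (1 * \<delta> + \<delta> * 1 + \<delta> * \<delta>)"
    unfolding PP by (intro op_bounded_add op_bounded_mult oU oUt E op_bounded_transpose \<delta>0) simp_all
  then have "op_bounded (P ** P - mat 1) (3 * \<delta>)"
    by (rule op_bounded_mono) (use mult_left_le_one_le[OF \<delta>0 \<delta>0] \<delta> in simp)
  then have P1: "op_bounded (P - mat 1) (3 * \<delta>)" by (rule op_bounded_psd_minus_id[OF P(1)])
  have "P \<in> bounded_below_matrices 2"
    unfolding bounded_below_matrices_def
  proof (intro CollectI allI)
    fix y
    have "P *v y - (P - mat 1) *v y = y" by (simp add: matrix_vector_mult_diff_rdistrib)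
    then have "norm y \<le> norm (P *v y) + norm ((P - mat 1) *v y)"
      using norm_triangle_ineq4[of "P *v y" "(P - mat 1) *v y"] by simp
    also have "\<dots> \<le> norm (P *v y) + 3 * \<delta> * norm y"
      using P1 unfolding op_bounded_def by simp
    finally show "norm y \<le> 2 * norm (P *v y)"
      using \<delta> mult_right_mono[of "3 * \<delta>" "1/2" "norm y"] by simp
  qed
  then have inv: "invertible P" and Pinv: "op_bounded (matrix_inv P) 2"
    by (rule bounded_below_matrix_inv)+
  define Pi where "Pi = matrix_inv P"
  have "stiefel_map (U + E) = Z ** Pi"
    unfolding stiefel_map_def Pi_def P_def Z_def ..
  moreover have "U ** (P - mat 1) ** Pi = U - U ** Pi"
    using matrix_inv(1)[OF inv]
    by (simp add: Pi_def matrix_diff_ldistrib matrix_diff_rdistrib flip: matrix_mul_assoc)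
  ultimately have "stiefel_map (U + E) - U = E ** Pi - U ** (P - mat 1) ** Pi"
    by (simp add: Z_def matrix_add_rdistrib)
  moreover have "op_bounded (E ** Pi - U ** (P - mat 1) ** Pi) (\<delta> * 2 + 1 * (3 * \<delta>) * 2)"
    unfolding Pi_def by (intro op_bounded_diff op_bounded_mult E Pinv oU P1) (simp_all add: \<delta>0)
  ultimately show ?thesis by simp
qed

section \<open>Gaussian matrices\<close>

lemma Basis_matrix: "(Basis :: (real^'r^'d) set) = (\<lambda>(i, j). axis i (axis j 1)) ` UNIV"
  by (auto simp: Basis_vec_def)

lemma inner_matrix_axis: "(Z::real^'r^'d) \<bullet> axis i (axis j 1) = Z $ i $ j"
  by (simp add: inner_axis)

lemma prod_Basis_matrix:
  fixes g :: "real \<Rightarrow> 'a::comm_monoid_mult"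
  shows "(\<Prod>b\<in>(Basis::(real^'r^'d) set). g (Z \<bullet> b)) = (\<Prod>i\<in>UNIV. \<Prod>j\<in>UNIV. g (Z $ i $ j))"
proof -
  have "inj (\<lambda>(i, j). axis i (axis j (1::real)) :: real^'r^'d)"
    by (auto simp: inj_on_def axis_eq_axis)
  then have "(\<Prod>b\<in>(Basis::(real^'r^'d) set). g (Z \<bullet> b)) = (\<Prod>p\<in>UNIV. g (Z $ fst p $ snd p))"
    unfolding Basis_matrix by (subst prod.reindex) (auto simp: case_prod_beta inner_matrix_axis)
  also have "\<dots> = (\<Prod>i\<in>UNIV. \<Prod>j\<in>UNIV. g (Z $ i $ j))"
    by (simp add: prod.cartesian_product case_prod_beta flip: UNIV_Times_UNIV)
  finally show ?thesis .
qed

lemma gauss_mat_density_Basis: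
  "gauss_mat = density lborel (\<lambda>Z. \<Prod>b\<in>(Basis::(real^'r^'d) set). ennreal (std_normal_density (Z \<bullet> b)))"
  unfolding gauss_mat_def by (simp add: prod_ennreal prod_nonneg prod_Basis_matrix[of std_normal_density])

lemma space_gauss_mat [simp]: "space gauss_mat = UNIV"
  by (simp add: gauss_mat_def)

lemma sets_gauss_mat [measurable_cong]: "sets gauss_mat = sets borel"
  by (simp add: gauss_mat_def)

lemma prob_space_gauss_mat: "prob_space (gauss_mat :: (real^'r^'d) measure)"
proof (rule prob_spaceI)
  have "emeasure (gauss_mat :: (real^'r^'d) measure) UNIV
      = (\<integral>\<^sup>+Z. (\<Prod>b\<in>(Basis::(real^'r^'d) set). ennreal (std_normal_density (Z \<bullet> b))) \<partial>lborel)"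
    unfolding gauss_mat_density_Basis by (simp add: emeasure_density)
  also have "\<dots> = 1"
    by (subst nn_integral_lborel_prod) (auto simp: nn_integral_eq_integral)
  finally show "emeasure (gauss_mat :: (real^'r^'d) measure) (space gauss_mat) = 1" by simp
qed

lemma std_normal_density_antimono:
  assumes "\<bar>z\<bar> \<le> a"
  shows "std_normal_density a \<le> std_normal_density z"
proof -
  have "z^2 \<le> a^2" using assms by (metis abs_ge_zero order_trans power2_abs power_mono)
  then show ?thesis unfolding std_normal_density_def by (intro mult_left_mono) auto
qed

lemma measure_gauss_mat_cube_ge:
  fixes U :: "real^'r^'d"
  assumes \<eta>: "0 < \<eta>" and a: "\<And>i j. \<bar>U$i$j\<bar> + \<eta> \<le> a"
  shows "(std_normal_density a * (2 * \<eta>)) ^ (CARD('d) * CARD('r))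
    \<le> measure gauss_mat {Z. \<forall>i j. \<bar>Z$i$j - U$i$j\<bar> \<le> \<eta>}"
proof -
  define n where "n = CARD('d) * CARD('r)"
  define C :: "real^'r^'d" where "C = (\<chi> i j. \<eta>)"
  define Q where "Q = cbox (U - C) (U + C)"
  have "Z \<in> Q \<longleftrightarrow> (\<forall>i j. \<bar>Z$i$j - U$i$j\<bar> \<le> \<eta>)" for Z
    unfolding Q_def mem_box Basis_matrix by (auto simp: inner_matrix_axis C_def abs_le_iff algebra_simps)
  then have Q: "Q = {Z. \<forall>i j. \<bar>Z$i$j - U$i$j\<bar> \<le> \<eta>}" by blast
  have prod_const: "(\<Prod>i\<in>(UNIV::'d set). \<Prod>j\<in>(UNIV::'r set). x) = x ^ n" for x :: "'a::comm_monoid_mult"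
    by (simp add: n_def mult.commute flip: power_mult)
  have "emeasure lborel Q = (\<Prod>b\<in>(Basis::(real^'r^'d) set). ((U + C) - (U - C)) \<bullet> b)"
    unfolding Q_def using \<eta> by (intro emeasure_lborel_cbox) (auto simp: Basis_matrix C_def inner_matrix_axis)
  also have "\<dots> = ennreal ((2 * \<eta>) ^ n)"
  proof -
    have "((U + C) - (U - C)) $ i $ j = 2 * \<eta>" for i j by (simp add: C_def)
    then show ?thesis by (simp only: prod_Basis_matrix[of "\<lambda>x. x"] prod_const)
  qed
  finally have vol: "emeasure lborel Q = ennreal ((2 * \<eta>) ^ n)" .
  have dens: "ennreal (std_normal_density a ^ n) * indicator Q Z
      \<le> (\<Prod>b\<in>Basis. ennreal (std_normal_density (Z \<bullet> b))) * indicator Q Z" for Z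
  proof (cases "Z \<in> Q")
    case True
    have "std_normal_density a ^ n \<le> (\<Prod>i\<in>UNIV. \<Prod>j\<in>UNIV. std_normal_density (Z $ i $ j))"
      unfolding prod_const[symmetric]
    proof (intro prod_mono conjI prod_nonneg std_normal_density_antimono)
      fix i j
      have "\<bar>Z $ i $ j - U $ i $ j\<bar> \<le> \<eta>" using True unfolding Q by blast
      then show "\<bar>Z $ i $ j\<bar> \<le> a" using a[of i j] by arith
    qed simp_all
    then show ?thesis
      using True by (simp add: prod_Basis_matrix prod_ennreal prod_nonneg)
  qed simp
  have "ennreal ((std_normal_density a * (2 * \<eta>)) ^ n) = ennreal (std_normal_density a ^ n) * emeasure lborel Q"
    using \<eta> by (simp add: vol power_mult_distrib ennreal_mult)
  also have "\<dots> = (\<integral>\<^sup>+Z. ennreal (std_normal_density a ^ n) * indicator Q Z \<partial>lborel)"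
    by (simp add: Q_def nn_integral_cmult_indicator)
  also have "\<dots> \<le> (\<integral>\<^sup>+Z. (\<Prod>b\<in>Basis. ennreal (std_normal_density (Z \<bullet> b))) * indicator Q Z \<partial>lborel)"
    by (intro nn_integral_mono dens)
  also have "\<dots> = emeasure gauss_mat Q"
    unfolding gauss_mat_density_Basis by (simp add: Q_def emeasure_density)
  finally have "ennreal ((std_normal_density a * (2 * \<eta>)) ^ n) \<le> emeasure gauss_mat Q" .
  moreover have "emeasure (gauss_mat :: (real^'r^'d) measure) Q \<noteq> top"
    using finite_measure.emeasure_finite[OF prob_space.finite_measure[OF prob_space_gauss_mat]] .
  ultimately have "enn2real (ennreal ((std_normal_density a * (2 * \<eta>)) ^ n)) \<le> measure gauss_mat Q"
    unfolding measure_def by (intro enn2real_mono) (simp_all add: less_top)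
  then show ?thesis using \<eta> by (simp add: Q n_def)
qed

lemma stiefel_entry_le_1: "U \<in> stiefel \<Longrightarrow> \<bar>U $ i $ j\<bar> \<le> 1"
  using matrix_component_le_onorm[of U i j] onorm_le_op_bound[of U 1] stiefel_isometry[of U]
  by (force simp: stiefel_def op_bounded_def)

lemma stiefel_map_near:
  fixes U Z :: "real^'r^'d"
  assumes U: "U \<in> stiefel" and \<delta>: "\<delta> \<le> 1/16"
    and Z: "\<And>i j. \<bar>Z$i$j - U$i$j\<bar> \<le> \<delta> / (CARD('d) * CARD('r))"
  shows "onorm ((*v) (stiefel_map Z - U)) \<le> 8 * \<delta>"
proof -
  have "onorm ((*v) (Z - U)) \<le> real CARD('d) * real CARD('r) * (\<delta> / (CARD('d) * CARD('r)))"
    using Z by (intro onorm_le_matrix_component) simp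
  then have "op_bounded (Z - U) \<delta>"
    by (intro op_bounded_mono[OF op_bounded_onorm]) simp
  then have "op_bounded (stiefel_map (U + (Z - U)) - U) (8 * \<delta>)"
    using U \<delta> by (intro stiefel_map_perturb) (auto simp: stiefel_def)
  then show ?thesis by (simp add: onorm_le_op_bound)
qed

lemma sets_stiefel_event:
  "{Z \<in> space gauss_mat. onorm (\<lambda>x. (stiefel_map Z - U) *v x) \<le> \<epsilon>} \<in> sets gauss_mat"
proof -
  have "(\<lambda>Z. onorm ((*v) (stiefel_map Z - U))) \<in> borel_measurable borel"
    by (intro borel_measurable_continuous_on[OF continuous_onorm_matrix] borel_measurable_diff
        borel_measurable_stiefel_map borel_measurable_const)
  then show ?thesis by (simp add: borel_measurable_iff_le sets_gauss_mat)
qed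

lemma measure_stiefel_event_ge:
  fixes U :: "real^'r^'d"
  assumes U: "U \<in> stiefel" and m: "0 < m" "m \<le> \<epsilon>" "m \<le> 1/2"
  shows "(std_normal_density 2 * m / (8 * CARD('d) * CARD('r))) ^ (CARD('d) * CARD('r))
    \<le> measure gauss_mat {Z \<in> space gauss_mat. onorm (\<lambda>x. (stiefel_map Z - U) *v x) \<le> \<epsilon>}"
proof -
  define N where "N = real CARD('d) * real CARD('r)"
  define \<eta> where "\<eta> = m / (16 * N)"
  have "0 < CARD('d) * CARD('r)" by simp
  then have N: "1 \<le> N" unfolding N_def by (metis Suc_leI One_nat_def of_nat_1 of_nat_le_iff of_nat_mult)
  have \<eta>: "0 < \<eta>" "\<eta> \<le> 1" using m N by (auto simp: \<eta>_def field_simps)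
  have "{Z. \<forall>i j. \<bar>Z$i$j - U$i$j\<bar> \<le> \<eta>}
      \<subseteq> {Z \<in> space gauss_mat. onorm (\<lambda>x. (stiefel_map Z - U) *v x) \<le> \<epsilon>}"
  proof safe
    fix Z :: "real^'r^'d"
    assume "\<forall>i j. \<bar>Z$i$j - U$i$j\<bar> \<le> \<eta>"
    then have "onorm ((*v) (stiefel_map Z - U)) \<le> 8 * (m / 16)"
      using m by (intro stiefel_map_near[OF U]) (simp_all add: \<eta>_def N_def mult.assoc)
    then show "onorm ((*v) (stiefel_map Z - U)) \<le> \<epsilon>" using m by simp
  qed simp
  then have "measure gauss_mat {Z. \<forall>i j. \<bar>Z$i$j - U$i$j\<bar> \<le> \<eta>}
      \<le> measure gauss_mat {Z \<in> space gauss_mat. onorm (\<lambda>x. (stiefel_map Z - U) *v x) \<le> \<epsilon>}"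
    by (intro finite_measure.finite_measure_mono[OF prob_space.finite_measure[OF prob_space_gauss_mat]]
        sets_stiefel_event)
  moreover have "(std_normal_density 2 * (2 * \<eta>)) ^ (CARD('d) * CARD('r))
      \<le> measure gauss_mat {Z. \<forall>i j. \<bar>Z$i$j - U$i$j\<bar> \<le> \<eta>}"
  proof (rule measure_gauss_mat_cube_ge[OF \<eta>(1)])
    show "\<bar>U$i$j\<bar> + \<eta> \<le> 2" for i j using stiefel_entry_le_1[OF U, of i j] \<eta>(2) by linarith
  qed
  moreover have "std_normal_density 2 * (2 * \<eta>) = std_normal_density 2 * m / (8 * CARD('d) * CARD('r))"
    by (simp add: \<eta>_def N_def)
  ultimately show ?thesis by simp
qed

theorem lemma16:
  shows "\<exists>c>0. \<forall>(U::real^'r^'d) \<in> stiefel. \<forall>\<epsilon>>0.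
     measure gauss_mat {Z \<in> space gauss_mat. onorm (\<lambda>x. (stiefel_map Z - U) *v x) \<le> \<epsilon>}
       \<ge> c * (min \<epsilon> (1/2)) ^ (CARD('d) * CARD('r))"
proof -
  define c where "c = (std_normal_density 2 / (8 * CARD('d) * CARD('r))) ^ (CARD('d) * CARD('r))"
  have "0 < c" by (simp add: c_def std_normal_density_def)
  moreover have "c * (min \<epsilon> (1/2)) ^ (CARD('d) * CARD('r))
      \<le> measure gauss_mat {Z \<in> space gauss_mat. onorm (\<lambda>x. (stiefel_map Z - U) *v x) \<le> \<epsilon>}"
    if "U \<in> stiefel" "0 < \<epsilon>" for U :: "real^'r^'d" and \<epsilon> :: real
    using measure_stiefel_event_ge[OF that(1), of "min \<epsilon> (1/2)" \<epsilon>] that(2)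
    by (simp add: c_def power_mult_distrib[symmetric])
  ultimately show ?thesis by blast
qed

end
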